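(* Let $K\subset\mathbb{R}^m$ be a proper cone which is an $\mathbb{R}^m_+$-isotone projection set. Then exactly one of the following alternatives holds: (1) $K\subset\mathbb{R}^m_+$; (2) $\operatorname{int}(K^* )\cap\mathbb{R}^m_+=\varnothing$.
   Context: $\mathbb{R}^m$ carries the standard inner product and a Cartesian coordinate system; $\mathbb{R}^m_+=\{x:x^i\ge0,\ i=1,\dots,m\}$ and $x\le_{\mathbb{R}^m_+}y$ means $x^i\le y^i$ for all $i$. A proper cone is a closed convex cone that is pointed ($K\cap(-K)=\{0\}$) and generating ($K-K=\mathbb{R}^m$). $K^*=\{y:\langle x,y\rangle\ge0\ \forall x\in K\}$. $K$ is an $\mathbb{R}^m_+$-isotone projection set if $x\le_{\mathbb{R}^m_+}y$ implies $P_Kx\le_{\mathbb{R}^m_+}P_Ky$, where $P_K$ is the metric projection onto $K$. *)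

theory Defs
  imports "HOL-Analysis.Analysis"
begin

definition nonneg_orthant :: "(real ^ 'm) set" where
  "nonneg_orthant = {x. \<forall>i. 0 \<le> x $ i}"

definition orthant_le :: "real ^ 'm \<Rightarrow> real ^ 'm \<Rightarrow> bool" where
  "orthant_le x y \<longleftrightarrow> (\<forall>i. x $ i \<le> y $ i)"

definition proper_cone :: "(real ^ 'm) set \<Rightarrow> bool" where
  "proper_cone K \<longleftrightarrow> closed K \<and> convex K \<and> cone K
     \<and> K \<inter> uminus ` K = {0} \<and> {x - y | x y. x \<in> K \<and> y \<in> K} = UNIV"

definition dual_cone :: "(real ^ 'm) set \<Rightarrow> (real ^ 'm) set" where
  "dual_cone K = {y. \<forall>x\<in>K. 0 \<le> inner x y}"

definition isotone_projection_set :: "(real ^ 'm) set \<Rightarrow> bool" where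
  "isotone_projection_set K \<longleftrightarrow>
     (\<forall>x y. orthant_le x y \<longrightarrow> orthant_le (closest_point K x) (closest_point K y))"

end

theory Submission
  imports Defs
begin

text \<open>
  If \<open>K \<subseteq> \<real>\<^sup>m\<^sub>+\<close>, then \<open>\<real>\<^sup>m\<^sub>+ \<subseteq> K\<^sup>*\<close>, so the all-ones vector is an interior point of
  \<open>K\<^sup>*\<close> lying in the orthant. Conversely, let \<open>u \<in> int(K\<^sup>*) \<inter> \<real>\<^sup>m\<^sub>+\<close>; then \<open>\<langle>v,u\<rangle> > 0\<close> for
  every nonzero \<open>v \<in> K\<close>. For \<open>y = -e\<^sub>i\<close>, isotonicity gives \<open>P\<^sub>K y \<le> P\<^sub>K 0 = 0\<close>, hence
  \<open>\<langle>P\<^sub>K y,u\<rangle> \<le> 0\<close> and so \<open>P\<^sub>K y = 0\<close>. The variational inequality of the projection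
  then reads \<open>\<langle>-e\<^sub>i,k\<rangle> \<le> 0\<close> for all \<open>k \<in> K\<close>, i.e. \<open>K \<subseteq> \<real>\<^sup>m\<^sub>+\<close>.
\<close>

lemma inner_nonneg_orthant:
  assumes "x \<in> nonneg_orthant" "w \<in> nonneg_orthant"
  shows "0 \<le> inner x w"
  using assms unfolding inner_vec_def nonneg_orthant_def by (auto intro!: sum_nonneg)

lemma nonneg_orthant_subset_dual_cone:
  assumes "K \<subseteq> nonneg_orthant"
  shows "nonneg_orthant \<subseteq> dual_cone K"
  using assms inner_nonneg_orthant unfolding dual_cone_def by blast

lemma one_in_interior_nonneg_orthant: "(\<chi> i. 1) \<in> interior (nonneg_orthant :: (real ^ 'm) set)"
proof -
  have "ball (\<chi> i. 1) 1 \<subseteq> (nonneg_orthant :: (real ^ 'm) set)"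
  proof
    fix w :: "real ^ 'm"
    assume w: "w \<in> ball (\<chi> i. 1) 1"
    have "0 \<le> w $ i" for i
    proof -
      have "\<bar>((\<chi> i. 1) - w) $ i\<bar> \<le> norm ((\<chi> i. 1) - w)" by (rule component_le_norm_cart)
      also have "\<dots> < 1" using w by (simp add: dist_norm)
      finally show ?thesis by simp
    qed
    then show "w \<in> nonneg_orthant" by (simp add: nonneg_orthant_def)
  qed
  then show ?thesis
    by (meson centre_in_ball interior_maximal open_ball subsetD zero_less_one)
qed

lemma interior_dual_cone_inner_pos:
  assumes "u \<in> interior (dual_cone K)" "v \<in> K" "v \<noteq> 0"
  shows "0 < inner v u"
proof -
  obtain e where e: "e > 0" "ball u e \<subseteq> dual_cone K"
    using assms(1) by (meson mem_interior)
  define w where "w = u - (e / (2 * norm v)) *\<^sub>R v"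
  have nv: "norm v > 0" using assms(3) by simp
  have "dist u w < e" using nv e by (simp add: w_def dist_norm)
  then have "0 \<le> inner v w" using e assms(2) unfolding dual_cone_def by auto
  also have "inner v w = inner v u - e / 2 * norm v"
    using nv by (simp add: w_def inner_diff_right dot_square_norm power2_eq_square)
  finally have "e / 2 * norm v \<le> inner v u" by simp
  moreover have "0 < e / 2 * norm v" using e nv by simp
  ultimately show ?thesis by linarith
qed

lemma inner_nonpos_if_closest_point_eq_0:
  assumes "closed K" "convex K" "closest_point K y = 0" "k \<in> K"
  shows "inner y k \<le> 0"
  using closest_point_dot[OF assms(2,1,4), of y] assms(3) by simp

lemma closest_point_eq_0_if_nonpos:
  assumes iso: "isotone_projection_set K" and "closed K" "0 \<in> K"
    and u: "u \<in> interior (dual_cone K)" "u \<in> nonneg_orthant"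
    and y: "orthant_le y 0"
  shows "closest_point K y = 0"
proof (rule ccontr)
  let ?p = "closest_point K y"
  assume "?p \<noteq> 0"
  moreover have "?p \<in> K" using closest_point_in_set[OF \<open>closed K\<close>] \<open>0 \<in> K\<close> by blast
  ultimately have "0 < inner ?p u" using interior_dual_cone_inner_pos[OF u(1)] by blast
  moreover have "orthant_le ?p (closest_point K 0)"
    using iso y unfolding isotone_projection_set_def by blast
  then have "- ?p \<in> nonneg_orthant"
    by (simp add: closest_point_self[OF \<open>0 \<in> K\<close>] orthant_le_def nonneg_orthant_def)
  then have "inner ?p u \<le> 0" using inner_nonneg_orthant[OF _ u(2)] by fastforce
  ultimately show False by simp
qed

lemma subset_nonneg_orthant_if_interior_dual_cone_meets:
  assumes "isotone_projection_set K" "closed K" "convex K" "0 \<in> K"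
    and "u \<in> interior (dual_cone K)" "u \<in> nonneg_orthant"
  shows "K \<subseteq> nonneg_orthant"
proof
  fix k assume k: "k \<in> K"
  have "0 \<le> k $ i" for i
  proof -
    have "orthant_le (axis i (-1)) 0" by (simp add: orthant_le_def axis_def)
    then have "closest_point K (axis i (-1)) = 0"
      by (rule closest_point_eq_0_if_nonpos[OF assms(1,2,4,5,6)])
    then have "inner (axis i (-1)) k \<le> 0"
      using inner_nonpos_if_closest_point_eq_0 assms(2,3) k by blast
    then show ?thesis by (simp add: inner_axis')
  qed
  then show "k \<in> nonneg_orthant" by (simp add: nonneg_orthant_def)
qed

theorem corollary3:
  fixes K :: "(real ^ 'm) set"
  assumes "proper_cone K" and "isotone_projection_set K"
  shows "(K \<subseteq> nonneg_orthant) \<noteq> (interior (dual_cone K) \<inter> nonneg_orthant = {})"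
proof -
  have K: "closed K" "convex K" "0 \<in> K"
    using assms(1) unfolding proper_cone_def by auto
  have "interior (dual_cone K) \<inter> nonneg_orthant \<noteq> {}" if "K \<subseteq> nonneg_orthant"
  proof -
    have "(\<chi> i. 1) \<in> interior (dual_cone K)"
      using one_in_interior_nonneg_orthant interior_mono[OF nonneg_orthant_subset_dual_cone[OF that]]
      by blast
    moreover have "(\<chi> i. 1) \<in> nonneg_orthant" by (simp add: nonneg_orthant_def)
    ultimately show ?thesis by blast
  qed
  moreover have "K \<subseteq> nonneg_orthant" if "interior (dual_cone K) \<inter> nonneg_orthant \<noteq> {}"
    using that subset_nonneg_orthant_if_interior_dual_cone_meets[OF assms(2) K] by blast
  ultimately show ?thesis by blast
qed

end
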